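(* Let $\mathsf P$ be a one-move rider with basic move $(c,d)$ and let $\mathcal B$ be a board. The denominator of the inside-out polytope $(\mathcal B^q,\mathcal A_{\mathsf P})$ equals the least common denominator of the corners of $\mathcal B$ when $q=1$, and when $q\ge2$ it equals the least common denominator of the corners of $\mathcal B$ and their antipodes.
   Context: A board $\mathcal B$ is a convex polygon in $\mathbb R^2$ with rational corners (vertices). A one-move rider has a single basic move $(c,d)\in\mathbb Z^2\setminus\{0\}$ with $\gcd(c,d)=1$. For $q$ pieces, $\mathcal A_{\mathsf P}$ is the arrangement in $\mathbb R^{2q}$ of hyperplanes $\mathcal H_{ij}=\{(z_1,\dots,z_q):(z_j-z_i)\cdot(d,-c)=0\}$, $1\le i<j\le q$. A vertex of $(\mathcal B^q,\mathcal A_{\mathsf P})$ is a point of $\mathcal B^q$ that is the unique point of an intersection of some of these hyperplanes and some affine hulls of facets of $\mathcal B^q$; the denominator of $(\mathcal B^q,\mathcal A_{\mathsf P})$ is the least common multiple of the least common denominators of the coordinates of its vertices. For a corner $z$ of $\mathcal B$, its antipode is the other point (if any) where the line through $z$ parallel to $(c,d)$ meets the boundary of $\mathcal B$ (possibly another corner); if $(c,d)$ is parallel to an edge $z_iz_j$ of $\mathcal B$, the corners $z_i$ and $z_j$ are each other's antipodes. The least common denominator of a set of rational points is the least common multiple of the denominators of all their coordinates. *)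

theory Defs
  imports "HOL-Analysis.Analysis"
begin

text \<open>Points of the plane are pairs of reals; a configuration of q pieces is an
  element of (real \<times> real)^'q, where the finite type 'q has exactly q elements.\<close>

type_synonym pt = "real \<times> real"

definition rational_pt :: "pt \<Rightarrow> bool" where
  "rational_pt p \<longleftrightarrow> fst p \<in> \<rat> \<and> snd p \<in> \<rat>"

definition board :: "pt set \<Rightarrow> bool" where
  "board B \<longleftrightarrow> polytope B \<and> interior B \<noteq> {} \<and>
     (\<forall>v. v extreme_point_of B \<longrightarrow> rational_pt v)"

definition corners :: "pt set \<Rightarrow> pt set" where
  "corners B = {v. v extreme_point_of B}"

text \<open>Denominator of a rational real number (1 for non-rationals, irrelevant here).\<close>
definition real_den :: "real \<Rightarrow> nat" where
  "real_den x = (if x \<in> \<rat> then nat (snd (quotient_of (THE r. of_rat r = x))) else 1)"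

definition lcd_pts :: "pt set \<Rightarrow> nat" where
  "lcd_pts P = Lcm ((\<lambda>p. lcm (real_den (fst p)) (real_den (snd p))) ` P)"

definition lcd_cfgs :: "(pt ^ 'q::finite) set \<Rightarrow> nat" where
  "lcd_cfgs Z = Lcm ((\<lambda>z. Lcm ((\<lambda>k. lcm (real_den (fst (z $ k))) (real_den (snd (z $ k)))) ` UNIV)) ` Z)"

definition board_power :: "pt set \<Rightarrow> (pt ^ 'q::finite) set" where
  "board_power B = {z. \<forall>k. z $ k \<in> B}"

definition rider_hyperplane :: "int \<Rightarrow> int \<Rightarrow> 'q::finite \<Rightarrow> 'q \<Rightarrow> (pt ^ 'q) set" where
  "rider_hyperplane c d i j = {z. inner (z $ j - z $ i) (of_int d, - of_int c) = 0}"

definition iop_vertices :: "int \<Rightarrow> int \<Rightarrow> pt set \<Rightarrow> (pt, 'q::{finite,linorder}) vec set" where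
  "iop_vertices c d B = {z :: (pt, 'q) vec. z \<in> board_power B \<and> (\<exists>S \<FF>.
      S \<subseteq> {(i, j). i < j} \<and> (\<forall>F\<in>\<FF>. F facet_of (board_power B :: (pt, 'q) vec set)) \<and>
      (\<Inter>(i, j)\<in>S. rider_hyperplane c d i j) \<inter> (\<Inter>F\<in>\<FF>. affine hull F) = {z})}"

definition iop_denominator :: "int \<Rightarrow> int \<Rightarrow> pt set \<Rightarrow> 'q::{finite,linorder} itself \<Rightarrow> nat" where
  "iop_denominator c d B _ = lcd_cfgs (iop_vertices c d B :: (pt, 'q) vec set)"

text \<open>Antipodes of a corner z: the line through z parallel to (c,d) meets the convex
  board B in a segment with endpoint z; the antipodes are its endpoints other than z.
  This is the other boundary point on the line, and, when (c,d) is parallel to an edge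
  z z', it is the corner z'.\<close>
definition antipodes :: "int \<Rightarrow> int \<Rightarrow> pt set \<Rightarrow> pt \<Rightarrow> pt set" where
  "antipodes c d B z = {w. w \<noteq> z \<and>
      w extreme_point_of (B \<inter> {z + t *\<^sub>R (of_int c, of_int d) | t. True})}"

end

theory Submission
  imports Defs
begin

text \<open>
  A vertex z of (B^q, A_P) is the unique point of some rider hyperplanes and facet hyperplanes
  of B^q. The facet normals split into normals supporting B at the pieces z_j, and uniqueness
  says no nonzero perturbation of z respects all these linear constraints. Moving a single
  piece along (c,d) shows that every piece has a supporting normal transversal to (c,d). A
  piece that is not a corner has only parallel supporting normals, so it can leave its rider
  line without violating them; moving all pieces of one rider line this way respects the rider
  constraints, so every rider line through a piece contains a corner piece. The transversal
  normal then makes each non-corner piece an endpoint of the chord of B along that line, i.e.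
  an antipode. Conversely, constant configurations at corners and, for q \<ge> 2, a corner with an
  antipode on one rider line are vertices.
\<close>

section \<open>The polyhedron \<open>B^q\<close>\<close>

lemma polyhedron_board_power:
  assumes "polyhedron B"
  shows "polyhedron (board_power B :: (pt ^ 'q::finite) set)"
proof -
  obtain H where H: "finite H" "B = \<Inter>H"
    and halfspace: "\<And>h. h \<in> H \<Longrightarrow> \<exists>a b. a \<noteq> 0 \<and> h = {x. a \<bullet> x \<le> b}"
    using assms unfolding polyhedron_def by blast
  have board_power_eq: "board_power B = \<Inter>((\<lambda>(k, h). {z :: pt ^ 'q. z $ k \<in> h}) ` (UNIV \<times> H))"
    using H(2) by (auto simp: board_power_def)
  have "polyhedron {z :: pt ^ 'q. z $ k \<in> h}" if hH: "h \<in> H" for k h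
  proof -
    obtain a b where "h = {x. a \<bullet> x \<le> b}" using halfspace[OF hH] by blast
    then have "{z :: pt ^ 'q. z $ k \<in> h} = {z. axis k a \<bullet> z \<le> b}" by (auto simp: inner_axis')
    then show ?thesis by (simp add: polyhedron_halfspace_le)
  qed
  then show ?thesis unfolding board_power_eq using H(1) by (intro polyhedron_Inter) auto
qed

lemma interior_board_power_nonempty:
  assumes "interior B \<noteq> {}"
  shows "interior (board_power B :: (pt ^ 'q::finite) set) \<noteq> {}"
proof -
  obtain p r where r: "r > 0" "ball p r \<subseteq> B" using assms mem_interior by blast
  have "ball (\<chi> k. p) r \<subseteq> (board_power B :: (pt ^ 'q) set)"
  proof
    fix y :: "pt ^ 'q" assume y: "y \<in> ball (\<chi> k. p) r"
    have "y $ k \<in> ball p r" for k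
    proof -
      have "dist p (y $ k) \<le> dist (\<chi> k. p) y"
        using dist_vec_nth_le[where x = "\<chi> k. p" and y = y and i = k] by simp
      also have "\<dots> < r" using y by simp
      finally show ?thesis by simp
    qed
    then show "y \<in> board_power B" using r(2) by (auto simp: board_power_def)
  qed
  then have "(\<chi> k. p) \<in> interior (board_power B :: (pt ^ 'q) set)"
    using r(1) mem_interior by blast
  then show ?thesis by blast
qed

lemma board_power_full_dim_polyhedron:
  assumes "board B"
  shows "polyhedron (board_power B :: (pt ^ 'q::finite) set)"
    and "interior (board_power B :: (pt ^ 'q) set) \<noteq> {}"
proof -
  have "polyhedron B" "interior B \<noteq> {}"
    using assms by (auto simp: board_def polytope_imp_polyhedron)
  then show "polyhedron (board_power B :: (pt ^ 'q) set)"
    and "interior (board_power B :: (pt ^ 'q) set) \<noteq> {}"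
    by (simp_all add: polyhedron_board_power interior_board_power_nonempty)
qed

lemma affine_hull_facet_of_full_dim:
  fixes P :: "'a::euclidean_space set"
  assumes "polyhedron P" "interior P \<noteq> {}" "F facet_of P"
  obtains a b where "a \<noteq> 0" "P \<subseteq> {x. a \<bullet> x \<le> b}" "affine hull F = {x. a \<bullet> x = b}"
proof -
  obtain a b where ab: "a \<noteq> 0" "P \<subseteq> {x. a \<bullet> x \<le> b}" "F = P \<inter> {x. a \<bullet> x = b}"
    using facet_of_polyhedron[OF assms(1,3)] by blast
  have sub: "affine hull F \<subseteq> {x. a \<bullet> x = b}"
    using ab(3) by (intro hull_minimal) (auto simp: affine_hyperplane)
  have "F \<noteq> {}" using assms(3) facet_of_def by blast
  have "aff_dim (affine hull F) = aff_dim P - 1" using assms(3) by (simp add: facet_of_def)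
  also have "\<dots> = int DIM('a) - 1" using aff_dim_nonempty_interior[OF assms(2)] by simp
  also have "\<dots> = aff_dim {x. a \<bullet> x = b}"
    using aff_dim_hyperplane[OF ab(1)] by (simp add: DIM_positive of_nat_diff)
  finally have "affine hull F = {x. a \<bullet> x = b}"
    using affine_dim_equal[OF affine_affine_hull affine_hyperplane _ sub] \<open>F \<noteq> {}\<close> by simp
  then show ?thesis using ab that by blast
qed

lemma eventually_moves_in_halfspaces:
  fixes z e :: "'a::real_inner"
  assumes "finite H" "z \<in> \<Inter>H" and halfspace: "\<And>h. h \<in> H \<Longrightarrow> h = {x. a h \<bullet> x \<le> b h}"
    and tangent: "\<And>h. h \<in> H \<Longrightarrow> a h \<bullet> z = b h \<Longrightarrow> a h \<bullet> e = 0"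
  shows "\<forall>\<^sub>F s in nhds 0. z + s *\<^sub>R e \<in> \<Inter>H"
proof -
  have "\<forall>\<^sub>F s in nhds 0. z + s *\<^sub>R e \<in> h" if h: "h \<in> H" for h
  proof (cases "a h \<bullet> z = b h")
    case True
    then show ?thesis using tangent[OF h] by (subst halfspace[OF h]) (simp add: inner_add_right)
  next
    case False
    have "z \<in> h" using assms(2) h by blast
    then have "a h \<bullet> z < b h" using False by (subst (asm) halfspace[OF h]) simp
    moreover have "((\<lambda>s::real. s) \<longlongrightarrow> 0) (nhds 0)" by (rule filterlim_ident)
    then have "((\<lambda>s. a h \<bullet> (z + s *\<^sub>R e)) \<longlongrightarrow> a h \<bullet> (z + 0 *\<^sub>R e)) (nhds 0)"
      by (intro tendsto_intros)
    ultimately have "\<forall>\<^sub>F s in nhds 0. a h \<bullet> (z + s *\<^sub>R e) < b h"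
      by (simp add: order_tendstoD(2))
    then show ?thesis by eventually_elim (subst halfspace[OF h], simp)
  qed
  then show ?thesis using assms(1) by (simp add: eventually_ball_finite)
qed

lemma extreme_point_Int_affine_determined_by_facets:
  fixes P :: "'a::euclidean_space set"
  assumes P: "polyhedron P" "interior P \<noteq> {}" and A: "affine A"
    and z: "z extreme_point_of (P \<inter> A)" and "y \<in> A"
    and y_facets: "\<And>F. F facet_of P \<Longrightarrow> z \<in> F \<Longrightarrow> y \<in> affine hull F"
  shows "y = z"
proof (rule ccontr)
  assume "y \<noteq> z"
  obtain H where H: "finite H" "P = affine hull P \<inter> \<Inter>H"
     "\<And>h. h \<in> H \<Longrightarrow> \<exists>a b. a \<noteq> 0 \<and> h = {x. a \<bullet> x \<le> b}"
     "\<And>F'. F' \<subset> H \<Longrightarrow> P \<subset> affine hull P \<inter> \<Inter>F'"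
    using P(1) by (simp add: polyhedron_Int_affine_minimal) meson
  then obtain a b where ab: "\<And>h. h \<in> H \<Longrightarrow> a h \<noteq> 0 \<and> h = {x. a h \<bullet> x \<le> b h}"
    by metis
  have P_eq: "P = \<Inter>H" using H(2) affine_hull_nonempty_interior[OF P(2)] by simp
  have zP: "z \<in> P" and zA: "z \<in> A" using z by (auto simp: extreme_point_of_def)
  have tangent: "a h \<bullet> (y - z) = 0" if h: "h \<in> H" and active: "a h \<bullet> z = b h" for h
  proof -
    have "(P \<inter> {x. a h \<bullet> x = b h}) facet_of P"
      using facet_of_polyhedron_explicit[OF H(1,2) ab H(4)] h by blast
    then have "y \<in> affine hull (P \<inter> {x. a h \<bullet> x = b h})" using y_facets zP active by blast
    moreover have "affine hull (P \<inter> {x. a h \<bullet> x = b h}) \<subseteq> {x. a h \<bullet> x = b h}"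
      by (intro hull_minimal) (auto simp: affine_hyperplane)
    ultimately show ?thesis using active by (auto simp: inner_diff_right)
  qed
  have "\<forall>\<^sub>F s in nhds 0. z + s *\<^sub>R (y - z) \<in> P"
    unfolding P_eq using H(1) zP ab tangent by (intro eventually_moves_in_halfspaces) (auto simp: P_eq)
  then obtain \<epsilon> where "\<epsilon> > 0" and small: "\<And>s. \<bar>s\<bar> < \<epsilon> \<Longrightarrow> z + s *\<^sub>R (y - z) \<in> P"
    by (auto simp: eventually_nhds_metric dist_real_def)
  have on_line: "z + s *\<^sub>R (y - z) \<in> A" for s
  proof -
    have "z + s *\<^sub>R (y - z) = (1 - s) *\<^sub>R z + s *\<^sub>R y" by (simp add: algebra_simps)
    then show ?thesis using A zA \<open>y \<in> A\<close> by (simp add: affine_alt)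
  qed
  define w where "w s = z + s *\<^sub>R (y - z)" for s
  have "w (\<epsilon> / 2) \<in> P \<inter> A" "w (- \<epsilon> / 2) \<in> P \<inter> A"
    using small[of "\<epsilon> / 2"] small[of "- \<epsilon> / 2"] on_line[of "\<epsilon> / 2"] on_line[of "- \<epsilon> / 2"]
      \<open>\<epsilon> > 0\<close>
    unfolding w_def by auto
  moreover have "z \<in> open_segment (w (\<epsilon> / 2)) (w (- \<epsilon> / 2))"
  proof -
    have "w (\<epsilon> / 2) \<noteq> w (- \<epsilon> / 2)" using \<open>y \<noteq> z\<close> \<open>\<epsilon> > 0\<close>
      by (simp add: w_def eq_neg_iff_add_eq_0 flip: scaleR_add_left)
    moreover have "z = midpoint (w (\<epsilon> / 2)) (w (- \<epsilon> / 2))"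
      by (simp add: w_def midpoint_def algebra_simps) (simp add: scaleR_add_left[symmetric])
    ultimately show ?thesis by (simp add: midpoint_in_open_segment)
  qed
  ultimately show False using z by (auto simp: extreme_point_of_def)
qed

lemma open_segment_vec_nth_eq:
  fixes x y z :: "'a::real_vector ^ 'n"
  assumes "z \<in> open_segment x y" "x $ k = y $ k"
  shows "z $ k = x $ k"
proof -
  obtain u where "z = (1 - u) *\<^sub>R x + u *\<^sub>R y"
    using assms(1) by (auto simp: in_segment)
  then have "z $ k = (1 - u) *\<^sub>R x $ k + u *\<^sub>R x $ k" using assms(2) by simp
  then show ?thesis by (simp add: scaleR_add_left[symmetric])
qed

lemma vec_nth_eq_if_extreme_point:
  fixes x y z :: "'a::real_vector ^ 'n"
  assumes "z \<in> open_segment x y" "z $ k extreme_point_of X" "x $ k \<in> X" "y $ k \<in> X"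
  shows "x $ k = y $ k"
proof (rule ccontr)
  assume "x $ k \<noteq> y $ k"
  obtain u where "0 < u" "u < 1" "z = (1 - u) *\<^sub>R x + u *\<^sub>R y"
    using assms(1) by (auto simp: in_segment)
  then have "z $ k \<in> open_segment (x $ k) (y $ k)"
    using \<open>x $ k \<noteq> y $ k\<close> by (auto simp: in_segment)
  then show False using assms(2-4) by (auto simp: extreme_point_of_def)
qed

lemma board_power_supporting_nth:
  assumes "board_power B \<subseteq> {x. a \<bullet> x \<le> b}" "z \<in> board_power B" "a \<bullet> z = b" "y \<in> B"
  shows "a $ j \<bullet> y \<le> a $ j \<bullet> z $ j"
proof -
  define w where "w = z + axis j (y - z $ j)"
  have "w $ i = (if i = j then y else z $ i)" for i by (simp add: w_def axis_def)
  then have "w \<in> board_power B" using assms(2,4) by (simp add: board_power_def)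
  then have "a \<bullet> w \<le> b" using assms(1) by blast
  moreover have "a \<bullet> w = a \<bullet> z + a $ j \<bullet> (y - z $ j)"
    by (simp add: w_def inner_add_right inner_commute[of a] inner_axis') (rule inner_commute)
  ultimately show ?thesis using assms(3) by (simp add: inner_diff_right)
qed

section \<open>Supporting lines in the plane\<close>

lemma extreme_point_of_line_supporting:
  fixes a v w p :: "'a::real_inner"
  assumes "w \<in> B" "w \<in> {p + t *\<^sub>R v | t. True}" "a \<bullet> v \<noteq> 0"
    and supporting: "\<And>y. y \<in> B \<Longrightarrow> a \<bullet> y \<le> a \<bullet> w"
  shows "w extreme_point_of (B \<inter> {p + t *\<^sub>R v | t. True})"
proof (rule extreme_point_of_Int_supporting_hyperplane_le[where a = a and b = "a \<bullet> w"])
  obtain t0 where w: "w = p + t0 *\<^sub>R v" using assms(2) by blast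
  have "t = t0" if "a \<bullet> (p + t *\<^sub>R v) = a \<bullet> w" for t
    using that assms(3) by (simp add: w inner_add_right)
  then show "(B \<inter> {p + t *\<^sub>R v | t. True}) \<inter> {x. a \<bullet> x = a \<bullet> w} = {w}"
    using assms(1,2) w by auto
  show "\<And>x. x \<in> B \<inter> {p + t *\<^sub>R v | t. True} \<Longrightarrow> a \<bullet> x \<le> a \<bullet> w" using supporting by blast
qed

definition perp :: "pt \<Rightarrow> pt" where
  "perp v = (snd v, - fst v)"

lemma inner_perp_perp [simp]: "perp x \<bullet> perp y = x \<bullet> y"
  by (simp add: perp_def inner_prod_def)

lemma inner_perp_self [simp]: "x \<bullet> perp x = 0"
  by (simp add: perp_def inner_prod_def)

lemma rider_hyperplane_eq_perp:
  "rider_hyperplane c d i j = {z. (z $ j - z $ i) \<bullet> perp (of_int c, of_int d) = 0}"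
  by (simp add: rider_hyperplane_def perp_def)

lemma affine_rider_hyperplanes:
  "affine (\<Inter>(i, j)\<in>S. rider_hyperplane c d i j :: (pt ^ 'q::finite) set)"
proof -
  define n :: pt where "n = perp (of_int c, of_int d)"
  have "rider_hyperplane c d i j = {z :: pt ^ 'q. z \<bullet> (axis j n - axis i n) = 0}" for i j
    by (simp add: rider_hyperplane_eq_perp n_def inner_diff_left inner_diff_right inner_axis)
  then have "rider_hyperplane c d i j = {z :: pt ^ 'q. (axis j n - axis i n) \<bullet> z = 0}" for i j
    by (simp add: inner_commute)
  then have "affine (rider_hyperplane c d i j :: (pt ^ 'q) set)" for i j
    by (simp add: affine_hyperplane)
  then show ?thesis by (auto intro: affine_Inter)
qed

lemma eq_0_if_orthogonal_to_independent:
  fixes w a a' :: pt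
  assumes "a \<bullet> w = 0" "a' \<bullet> w = 0" "a \<bullet> perp a' \<noteq> 0"
  shows "w = 0"
proof -
  obtain p q where w: "w = (p, q)" by (cases w)
  have "a \<bullet> perp a' * p = snd a' * (a \<bullet> w) - snd a * (a' \<bullet> w)"
    "a \<bullet> perp a' * q = fst a * (a' \<bullet> w) - fst a' * (a \<bullet> w)"
    by (simp_all add: w perp_def inner_prod_def algebra_simps)
  then show ?thesis using assms by (simp add: w zero_prod_def)
qed

lemma mem_line_iff_orthogonal_perp:
  fixes x p v :: pt
  assumes "v \<noteq> 0"
  shows "x \<in> {p + t *\<^sub>R v | t. True} \<longleftrightarrow> (x - p) \<bullet> perp v = 0"
proof
  assume "x \<in> {p + t *\<^sub>R v | t. True}"
  then show "(x - p) \<bullet> perp v = 0" by auto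
next
  assume orth: "(x - p) \<bullet> perp v = 0"
  have "v \<bullet> v \<noteq> 0" using assms by simp
  have scaled: "(v \<bullet> v) *\<^sub>R (x - p) = ((x - p) \<bullet> v) *\<^sub>R v"
    using orth by (cases v, cases "x - p") (simp add: perp_def inner_prod_def algebra_simps)
  have "x - p = inverse (v \<bullet> v) *\<^sub>R ((v \<bullet> v) *\<^sub>R (x - p))"
    using \<open>v \<bullet> v \<noteq> 0\<close> by simp
  also have "\<dots> = ((x - p) \<bullet> v / (v \<bullet> v)) *\<^sub>R v"
    by (simp add: scaled divide_inverse_commute)
  finally have "x = p + ((x - p) \<bullet> v / (v \<bullet> v)) *\<^sub>R v"
    by (simp add: algebra_simps)
  then show "x \<in> {p + t *\<^sub>R v | t. True}" by blast
qed

lemma extreme_point_of_two_supporting_lines: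
  fixes z a a' :: pt
  assumes "z \<in> B" "\<And>y. y \<in> B \<Longrightarrow> a \<bullet> y \<le> a \<bullet> z" "\<And>y. y \<in> B \<Longrightarrow> a' \<bullet> y \<le> a' \<bullet> z"
    and "a \<bullet> perp a' \<noteq> 0"
  shows "z extreme_point_of B"
  unfolding extreme_point_of_def
proof (intro conjI ballI assms(1) notI)
  fix x y assume "x \<in> B" "y \<in> B" "z \<in> open_segment x y"
  then obtain u where u: "0 < u" "u < 1" "z = (1 - u) *\<^sub>R x + u *\<^sub>R y" "x \<noteq> y"
    by (auto simp: in_segment)
  have "b \<bullet> (x - y) = 0" if supporting: "\<And>y. y \<in> B \<Longrightarrow> b \<bullet> y \<le> b \<bullet> z" for b
  proof -
    have "b \<bullet> z = (1 - u) * (b \<bullet> x) + u * (b \<bullet> y)" using u(3) by (simp add: inner_add_right)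
    then have "(1 - u) * (b \<bullet> z - b \<bullet> x) + u * (b \<bullet> z - b \<bullet> y) = 0"
      by (simp add: algebra_simps)
    moreover have "(1 - u) * (b \<bullet> z - b \<bullet> x) \<ge> 0" "u * (b \<bullet> z - b \<bullet> y) \<ge> 0"
      using supporting \<open>x \<in> B\<close> \<open>y \<in> B\<close> u(1,2) by auto
    ultimately have "(1 - u) * (b \<bullet> z - b \<bullet> x) = 0" "u * (b \<bullet> z - b \<bullet> y) = 0"
      by linarith+
    then have "b \<bullet> x = b \<bullet> y" using u(1,2) by simp
    then show ?thesis by (simp add: inner_diff_right)
  qed
  from this[OF assms(2)] this[OF assms(3)] have "x - y = 0"
    using assms(4) by (rule eq_0_if_orthogonal_to_independent)
  then show False using u(4) by simp
qed

section \<open>Vertices of the inside-out polytope\<close>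

lemma iop_vertex_if_extreme_point:
  fixes z :: "(pt, 'q::{finite,linorder}) vec"
  assumes "board B" "S \<subseteq> {(i, j). i < j}"
    and z: "z extreme_point_of (board_power B \<inter> (\<Inter>(i, j)\<in>S. rider_hyperplane c d i j))"
  shows "z \<in> iop_vertices c d B"
proof -
  define P where "P = (board_power B :: (pt, 'q) vec set)"
  define A where "A = (\<Inter>(i, j)\<in>S. rider_hyperplane c d i j :: (pt, 'q) vec set)"
  define \<FF> where "\<FF> = {F. F facet_of P \<and> z \<in> F}"
  have "polyhedron P" "interior P \<noteq> {}"
    unfolding P_def using board_power_full_dim_polyhedron[OF assms(1)] by auto
  have zP: "z \<in> P" and zA: "z \<in> A" using z by (auto simp: extreme_point_of_def P_def A_def)
  have "y = z" if "y \<in> A \<inter> (\<Inter>F\<in>\<FF>. affine hull F)" for y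
  proof (rule extreme_point_Int_affine_determined_by_facets)
    show "polyhedron P" "interior P \<noteq> {}" by fact+
    show "affine A" unfolding A_def by (rule affine_rider_hyperplanes)
    show "z extreme_point_of (P \<inter> A)" using z by (simp add: P_def A_def)
    show "y \<in> A" "\<And>F. F facet_of P \<Longrightarrow> z \<in> F \<Longrightarrow> y \<in> affine hull F"
      using that by (auto simp: \<FF>_def)
  qed
  then have "A \<inter> (\<Inter>F\<in>\<FF>. affine hull F) = {z}"
    using zA by (auto simp: \<FF>_def hull_inc)
  then show ?thesis
    unfolding iop_vertices_def using zP assms(2)
    by (auto simp: P_def A_def \<FF>_def hull_inc intro!: exI[of _ S] exI[of _ \<FF>])
qed

lemma iop_vertex_const_corner:
  assumes "board B" "p \<in> corners B"
  shows "(\<chi> i. p :: (pt, 'q::{finite,linorder}) vec) \<in> iop_vertices c d B"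
proof (rule iop_vertex_if_extreme_point[OF assms(1), where S = "{}"])
  have p: "p extreme_point_of B" using assms(2) by (simp add: corners_def)
  show "(\<chi> i. p) extreme_point_of (board_power B \<inter> (\<Inter>(i, j)\<in>{}. rider_hyperplane c d i j))"
    unfolding extreme_point_of_def
  proof (intro conjI ballI notI)
    show "(\<chi> i. p) \<in> board_power B \<inter> (\<Inter>(i, j)\<in>{}. rider_hyperplane c d i j)"
      using p by (auto simp: board_power_def extreme_point_of_def)
    fix x y assume "x \<in> board_power B \<inter> (\<Inter>(i, j)\<in>{}. rider_hyperplane c d i j)"
      and "y \<in> board_power B \<inter> (\<Inter>(i, j)\<in>{}. rider_hyperplane c d i j)"
      and seg: "(\<chi> i. p) \<in> open_segment x y"
    then have "x $ k = y $ k" for k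
      using p by (intro vec_nth_eq_if_extreme_point[OF seg]) (auto simp: board_power_def)
    then have "x = y" by (simp add: vec_eq_iff)
    then show False using seg by simp
  qed
qed auto

lemma rider_hyperplane_iff_line:
  assumes "(c, d) \<noteq> (0, 0)"
  shows "x \<in> rider_hyperplane c d i j \<longleftrightarrow>
    x $ j \<in> {x $ i + t *\<^sub>R (of_int c, of_int d) | t. True}"
proof -
  have "(of_int c, of_int d) \<noteq> (0 :: pt)" using assms by (simp add: zero_prod_def)
  then show ?thesis
    by (subst mem_line_iff_orthogonal_perp) (simp_all add: rider_hyperplane_eq_perp)
qed

lemma iop_vertex_corner_antipode:
  fixes i j :: "'q::{finite,linorder}"
  assumes "board B" "(c, d) \<noteq> (0, 0)" "p \<in> corners B" "w \<in> antipodes c d B p" "i < j"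
  shows "(\<chi> k. if k = j then w else p :: (pt, 'q) vec) \<in> iop_vertices c d B"
proof (rule iop_vertex_if_extreme_point[OF assms(1), where S = "{(i, j)}"])
  define L where "L = {p + t *\<^sub>R (of_int c, of_int d) | t. True}"
  define z :: "(pt, 'q) vec" where "z = (\<chi> k. if k = j then w else p)"
  have p: "p extreme_point_of B" using assms(3) by (simp add: corners_def)
  have w: "w extreme_point_of (B \<inter> L)" using assms(4) by (simp add: antipodes_def L_def)
  have "i \<noteq> j" using assms(5) by simp
  have on_line: "x \<in> (\<Inter>(i', j')\<in>{(i, j)}. rider_hyperplane c d i' j') \<longleftrightarrow>
      x $ j \<in> {x $ i + t *\<^sub>R (of_int c, of_int d) | t. True}" for x :: "(pt, 'q) vec"
    using rider_hyperplane_iff_line[OF assms(2)] by simp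
  show "z extreme_point_of (board_power B \<inter> (\<Inter>(i', j')\<in>{(i, j)}. rider_hyperplane c d i' j'))"
    unfolding extreme_point_of_def
  proof (intro conjI ballI notI)
    have "z $ j \<in> {z $ i + t *\<^sub>R (of_int c, of_int d) | t. True}"
      using w \<open>i \<noteq> j\<close> by (simp add: z_def L_def extreme_point_of_def)
    then have "z \<in> (\<Inter>(i', j')\<in>{(i, j)}. rider_hyperplane c d i' j')"
      using on_line by blast
    moreover have "z \<in> board_power B"
      using p w by (auto simp: board_power_def extreme_point_of_def z_def)
    ultimately show "z \<in> board_power B \<inter> (\<Inter>(i', j')\<in>{(i, j)}. rider_hyperplane c d i' j')"
      by blast
    fix x y assume x: "x \<in> board_power B \<inter> (\<Inter>(i', j')\<in>{(i, j)}. rider_hyperplane c d i' j')"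
      and y: "y \<in> board_power B \<inter> (\<Inter>(i', j')\<in>{(i, j)}. rider_hyperplane c d i' j')"
      and seg: "z \<in> open_segment x y"
    have in_B: "x $ k \<in> B" "y $ k \<in> B" for k using x y by (auto simp: board_power_def)
    have off_j: "x $ k = y $ k" if "k \<noteq> j" for k
      using p that in_B by (intro vec_nth_eq_if_extreme_point[OF seg]) (auto simp: z_def)
    then have "x $ i = p" "y $ i = p"
      using open_segment_vec_nth_eq[OF seg off_j] \<open>i \<noteq> j\<close> by (auto simp: z_def)
    moreover have "x \<in> rider_hyperplane c d i j" "y \<in> rider_hyperplane c d i j" using x y by auto
    then have "x $ j \<in> {x $ i + t *\<^sub>R (of_int c, of_int d) | t. True}"
      "y $ j \<in> {y $ i + t *\<^sub>R (of_int c, of_int d) | t. True}"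
      by (simp_all only: rider_hyperplane_iff_line[OF assms(2)])
    ultimately have "x $ j \<in> B \<inter> L" "y $ j \<in> B \<inter> L" using in_B by (simp_all add: L_def)
    then have "x $ j = y $ j"
      using w by (intro vec_nth_eq_if_extreme_point[OF seg]) (auto simp: z_def)
    then have "x = y" using off_j by (metis vec_eq_iff)
    then show False using seg by simp
  qed
qed (use assms(5) in auto)

text \<open>The linear shadow of a vertex: \<open>S\<close> are the rider constraints through \<open>z\<close>, and
  \<open>N j\<close> collects the \<open>j\<close>-th blocks of the normals of the facets of \<open>B^q\<close> through \<open>z\<close>;
  \<open>rigid\<close> is the uniqueness of \<open>z\<close> in the intersection of these hyperplanes.\<close>

locale rigid_configuration =
  fixes B :: "pt set" and v :: pt and z :: "pt ^ 'q::finite"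
    and S :: "('q \<times> 'q) set" and N :: "'q \<Rightarrow> pt set"
  assumes v_nonzero: "v \<noteq> 0"
    and nth_in_board: "\<And>j. z $ j \<in> B"
    and on_rider_lines: "\<And>i j. (i, j) \<in> S \<Longrightarrow> (z $ j - z $ i) \<bullet> perp v = 0"
    and supporting: "\<And>j a y. a \<in> N j \<Longrightarrow> y \<in> B \<Longrightarrow> a \<bullet> y \<le> a \<bullet> z $ j"
    and rigid: "\<And>\<delta>. (\<And>i j. (i, j) \<in> S \<Longrightarrow> (\<delta> $ j - \<delta> $ i) \<bullet> perp v = 0) \<Longrightarrow>
      (\<And>j a. a \<in> N j \<Longrightarrow> a \<bullet> \<delta> $ j = 0) \<Longrightarrow> \<delta> = 0"
begin

lemma transversal_normal:
  obtains a where "a \<in> N j" "a \<bullet> v \<noteq> 0"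
proof (rule ccontr)
  assume "\<not> thesis"
  then have "axis j v = 0"
    using that by (intro rigid) (auto simp: axis_def inner_diff_left)
  then show False using v_nonzero by (simp add: axis_eq_0_iff)
qed

lemma free_direction:
  assumes "z $ j \<notin> corners B"
  obtains u where "u \<bullet> perp v \<noteq> 0" "\<And>a. a \<in> N j \<Longrightarrow> a \<bullet> u = 0"
proof -
  have parallel: "a \<bullet> perp a' = 0" if "a \<in> N j" "a' \<in> N j" for a a'
    using extreme_point_of_two_supporting_lines[OF nth_in_board supporting[OF that(1)]
        supporting[OF that(2)]] assms
    by (auto simp: corners_def)
  obtain a0 where "a0 \<in> N j" "a0 \<bullet> v \<noteq> 0" by (rule transversal_normal)
  then show ?thesis using that[of "perp a0"] parallel by simp
qed

text \<open>Otherwise, moving every piece on the rider line of \<open>z $ k\<close> off that line along a free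
  direction is a nonzero perturbation respecting all constraints.\<close>

lemma corner_on_line:
  obtains j where "z $ j \<in> corners B" "(z $ k - z $ j) \<bullet> perp v = 0"
proof (rule ccontr)
  assume no_corner: "\<not> thesis"
  note corner_found = that
  define C where "C = {j. (z $ j - z $ k) \<bullet> perp v = 0}"
  have "z $ j \<notin> corners B" if "j \<in> C" for j
  proof
    assume "z $ j \<in> corners B"
    moreover have "(z $ k - z $ j) \<bullet> perp v = 0" using that by (simp add: C_def inner_diff_left)
    ultimately show False using no_corner corner_found by blast
  qed
  then have "\<forall>j\<in>C. \<exists>u. u \<bullet> perp v \<noteq> 0 \<and> (\<forall>a\<in>N j. a \<bullet> u = 0)"
    by (metis free_direction)
  then obtain U where U: "\<And>j. j \<in> C \<Longrightarrow> U j \<bullet> perp v \<noteq> 0 \<and> (\<forall>a\<in>N j. a \<bullet> U j = 0)"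
    by (metis bchoice)
  define \<delta> :: "pt ^ 'q" where "\<delta> = (\<chi> j. if j \<in> C then (1 / (U j \<bullet> perp v)) *\<^sub>R U j else 0)"
  have \<delta>_perp: "\<delta> $ j \<bullet> perp v = (if j \<in> C then 1 else 0)" for j
    using U[of j] by (simp add: \<delta>_def)
  have "\<delta> = 0"
  proof (rule rigid)
    fix i j assume "(i, j) \<in> S"
    then have "j \<in> C \<longleftrightarrow> i \<in> C"
      using on_rider_lines by (simp add: C_def inner_diff_left)
    then show "(\<delta> $ j - \<delta> $ i) \<bullet> perp v = 0" by (simp add: inner_diff_left \<delta>_perp)
  next
    show "a \<bullet> \<delta> $ j = 0" if "a \<in> N j" for j a using U[of j] that by (simp add: \<delta>_def)
  qed
  moreover have "\<delta> $ k \<bullet> perp v = 1" by (simp add: \<delta>_perp C_def)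
  ultimately show False by simp
qed

lemma nth_corner_or_antipode:
  "z $ k \<in> corners B \<or> (\<exists>j. z $ j \<in> corners B \<and> z $ k \<noteq> z $ j \<and>
     z $ k extreme_point_of (B \<inter> {z $ j + t *\<^sub>R v | t. True}))"
proof (rule corner_on_line[of k])
  fix j assume j: "z $ j \<in> corners B" "(z $ k - z $ j) \<bullet> perp v = 0"
  obtain a where a: "a \<in> N k" "a \<bullet> v \<noteq> 0" by (rule transversal_normal)
  have "z $ k \<in> {z $ j + t *\<^sub>R v | t. True}"
    using j(2) v_nonzero mem_line_iff_orthogonal_perp by blast
  from extreme_point_of_line_supporting[OF nth_in_board this a(2) supporting[OF a(1)]]
  have "z $ k extreme_point_of (B \<inter> {z $ j + t *\<^sub>R v | t. True})" .
  then show ?thesis using j(1) by auto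
qed

end

lemma iop_vertex_rigid_configuration:
  fixes z :: "(pt, 'q::{finite,linorder}) vec"
  assumes "board B" "(c, d) \<noteq> (0, 0)" "z \<in> iop_vertices c d B"
  shows "\<exists>S N. rigid_configuration B (of_int c, of_int d) z S N"
proof -
  define P where "P = (board_power B :: (pt, 'q) vec set)"
  obtain S \<FF> where "z \<in> P" and facets: "\<And>F. F \<in> \<FF> \<Longrightarrow> F facet_of P"
    and unique: "(\<Inter>(i, j)\<in>S. rider_hyperplane c d i j) \<inter> (\<Inter>F\<in>\<FF>. affine hull F) = {z}"
    using assms(3) unfolding iop_vertices_def P_def by blast
  have "polyhedron P" "interior P \<noteq> {}"
    unfolding P_def using board_power_full_dim_polyhedron[OF assms(1)] by auto
  then have "\<exists>a b. P \<subseteq> {x. a \<bullet> x \<le> b} \<and> affine hull F = {x. a \<bullet> x = b}" if "F \<in> \<FF>" for F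
    using affine_hull_facet_of_full_dim facets[OF that] by metis
  then obtain a b where supporting: "\<And>F. F \<in> \<FF> \<Longrightarrow> P \<subseteq> {x. a F \<bullet> x \<le> b F}"
    and hull_eq: "\<And>F. F \<in> \<FF> \<Longrightarrow> affine hull F = {x. a F \<bullet> x = b F}"
    by metis
  have z_S: "(z $ j - z $ i) \<bullet> perp (of_int c, of_int d) = 0" if "(i, j) \<in> S" for i j
    using unique that by (auto simp: rider_hyperplane_eq_perp)
  have z_F: "a F \<bullet> z = b F" if "F \<in> \<FF>" for F
    using unique hull_eq[OF that] that by blast
  define N where "N j = (\<lambda>F. a F $ j) ` \<FF>" for j
  have "rigid_configuration B (of_int c, of_int d) z S N"
  proof
    show "(of_int c, of_int d) \<noteq> (0 :: pt)" using assms(2) by (simp add: zero_prod_def)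
    show "z $ j \<in> B" for j using \<open>z \<in> P\<close> by (simp add: P_def board_power_def)
    show "(z $ j - z $ i) \<bullet> perp (of_int c, of_int d) = 0" if "(i, j) \<in> S" for i j
      using z_S that .
    show "a \<bullet> y \<le> a \<bullet> z $ j" if "a \<in> N j" "y \<in> B" for j a y
      using that supporting z_F \<open>z \<in> P\<close>
      by (auto simp: N_def P_def intro: board_power_supporting_nth)
  next
    fix \<delta> :: "(pt, 'q) vec"
    assume \<delta>_S: "\<And>i j. (i, j) \<in> S \<Longrightarrow> (\<delta> $ j - \<delta> $ i) \<bullet> perp (of_int c, of_int d) = 0"
      and \<delta>_N: "\<And>j a. a \<in> N j \<Longrightarrow> a \<bullet> \<delta> $ j = 0"
    have "z + \<delta> \<in> rider_hyperplane c d i j" if "(i, j) \<in> S" for i j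
      using z_S[OF that] \<delta>_S[OF that]
      by (simp add: rider_hyperplane_eq_perp inner_diff_left inner_add_left)
    moreover have "z + \<delta> \<in> affine hull F" if "F \<in> \<FF>" for F
    proof -
      have "a F \<bullet> \<delta> = 0"
        unfolding inner_vec_def using \<delta>_N that by (simp add: N_def)
      then show ?thesis using z_F[OF that] hull_eq[OF that] by (simp add: inner_add_right)
    qed
    ultimately have "z + \<delta> \<in> {z}" unfolding unique[symmetric] by blast
    then show "\<delta> = 0" by simp
  qed
  then show ?thesis by blast
qed

lemma iop_vertex_nth_corner_or_antipode:
  fixes z :: "(pt, 'q::{finite,linorder}) vec"
  assumes "board B" "(c, d) \<noteq> (0, 0)" "z \<in> iop_vertices c d B"
  shows "z $ k \<in> corners B \<or>
    (\<exists>j. j \<noteq> k \<and> z $ j \<in> corners B \<and> z $ k \<in> antipodes c d B (z $ j))"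
proof -
  obtain S N where "rigid_configuration B (of_int c, of_int d) z S N"
    using iop_vertex_rigid_configuration[OF assms] by blast
  from rigid_configuration.nth_corner_or_antipode[OF this, of k]
  show ?thesis by (auto simp: antipodes_def)
qed

lemma card_ne_1_if_ne:
  fixes j k :: 'a
  assumes "j \<noteq> k"
  shows "CARD('a) \<noteq> 1"
proof
  assume "CARD('a) = 1"
  then obtain x :: 'a where "UNIV = {x}" by (rule card_1_singletonE)
  then have "j \<in> {x}" "k \<in> {x}" by (simp_all only: UNIV_I flip: \<open>UNIV = {x}\<close>)
  then show False using assms by simp
qed

lemma obtain_less_if_card_ne_1:
  assumes "CARD('a) \<noteq> 1"
  obtains i j :: "'a::{finite,linorder}" where "i < j"
proof -
  obtain i j :: 'a where "i \<noteq> j"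
  proof (rule ccontr)
    assume "\<not> thesis"
    then have "x = undefined" for x :: 'a using that by blast
    then have "UNIV = {undefined :: 'a}" by auto
    then have "CARD('a) = card {undefined :: 'a}" by (rule arg_cong)
    then show False using assms by simp
  qed
  then show ?thesis using that by (cases "i < j") (auto simp: neq_iff)
qed

lemma iop_vertex_nth_mem:
  fixes z :: "(pt, 'q::{finite,linorder}) vec"
  assumes "board B" "(c, d) \<noteq> (0, 0)" "z \<in> iop_vertices c d B"
  shows "z $ k \<in> (if CARD('q) = 1 then corners B
    else corners B \<union> (\<Union>w\<in>corners B. antipodes c d B w))"
  using iop_vertex_nth_corner_or_antipode[OF assms, of k] card_ne_1_if_ne[where 'a = 'q] by auto

lemma exists_iop_vertex_nth_eq:
  assumes "board B" "(c, d) \<noteq> (0, 0)"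
    and "p \<in> (if CARD('q::{finite,linorder}) = 1 then corners B
      else corners B \<union> (\<Union>w\<in>corners B. antipodes c d B w))"
  shows "\<exists>z \<in> (iop_vertices c d B :: (pt, 'q) vec set). \<exists>k. z $ k = p"
proof -
  consider "p \<in> corners B" | w where "CARD('q) \<noteq> 1" "w \<in> corners B" "p \<in> antipodes c d B w"
    using assms(3) by (auto split: if_splits)
  then show ?thesis
  proof cases
    case 1
    with iop_vertex_const_corner[OF assms(1)]
    have "(\<chi> i. p) \<in> (iop_vertices c d B :: (pt, 'q) vec set)" .
    moreover have "(\<chi> i. p :: (pt, 'q) vec) $ undefined = p" by simp
    ultimately show ?thesis by blast
  next
    case 2
    then obtain i j :: 'q where "i < j" using obtain_less_if_card_ne_1 by blast
    from iop_vertex_corner_antipode[OF assms(1,2) 2(2,3) this]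
    have "(\<chi> k. if k = j then p else w) \<in> iop_vertices c d B" .
    moreover have "(\<chi> k. if k = j then p else w :: (pt, 'q) vec) $ j = p" by simp
    ultimately show ?thesis by blast
  qed
qed

lemma lcd_cfgs_eq_lcd_pts_nth: "lcd_cfgs Z = lcd_pts {z $ k | z k. z \<in> Z}"
proof -
  define den :: "pt \<Rightarrow> nat" where "den p = lcm (real_den (fst p)) (real_den (snd p))" for p
  define D where "D = Lcm (den ` {z $ k | z k. z \<in> Z})"
  define E where "E = Lcm ((\<lambda>z. Lcm ((\<lambda>k. den (z $ k)) ` UNIV)) ` Z)"
  have "den (z $ k) dvd D" if "z \<in> Z" for z k
    using that unfolding D_def by (auto intro: dvd_Lcm)
  then have "E dvd D" unfolding E_def by (auto intro!: Lcm_least)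
  moreover have "den (z $ k) dvd E" if "z \<in> Z" for z k
    unfolding E_def by (rule dvd_trans[OF dvd_Lcm[OF imageI[OF UNIV_I]] dvd_Lcm[OF imageI[OF that]]])
  then have "D dvd E" unfolding D_def by (auto intro!: Lcm_least)
  ultimately show ?thesis
    unfolding lcd_cfgs_def lcd_pts_def den_def[symmetric] D_def[symmetric] E_def[symmetric]
    by (rule dvd_antisym)
qed

theorem proposition4p1:
  fixes c d :: int and B :: "pt set"
  assumes "(c, d) \<noteq> (0, 0)" and "gcd c d = 1"
    and "board B"
  shows "iop_denominator c d B TYPE('q::{finite,linorder}) =
    (if CARD('q) = 1 then lcd_pts (corners B)
     else lcd_pts (corners B \<union> (\<Union>z\<in>corners B. antipodes c d B z)))"
proof -
  let ?T = "if CARD('q) = 1 then corners B else corners B \<union> (\<Union>w\<in>corners B. antipodes c d B w)"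
  have "{z $ k | z k. z \<in> (iop_vertices c d B :: (pt, 'q) vec set)} = ?T"
  proof (intro equalityI subsetI)
    show "p \<in> ?T" if "p \<in> {z $ k | z k. z \<in> (iop_vertices c d B :: (pt, 'q) vec set)}" for p
      using that iop_vertex_nth_mem[OF assms(3,1)] by blast
    show "p \<in> {z $ k | z k. z \<in> (iop_vertices c d B :: (pt, 'q) vec set)}" if "p \<in> ?T" for p
      using exists_iop_vertex_nth_eq[OF assms(3,1) that] by blast
  qed
  then show ?thesis by (simp add: iop_denominator_def lcd_cfgs_eq_lcd_pts_nth)
qed

end
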